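(* Let $n_0$ be a positive integer satisfying: 1. every subgroup of index a power of two of any insolvable group of order $n_0$ is insolvable; 2. there is no non-abelian simple group of order $2^r\cdot n_0$ for any integer $r\ge1$; 3. if $n_0$ is even, then $n_0/2$ is a solvable number; 4. for every odd prime $p$ dividing $n_0$ and every integer $r\ge0$, the number $(2^r\cdot n_0)/p$ is solvable. Then for every integer $r\ge0$: (i) every subgroup of index a power of two of any insolvable group of order $2^r\cdot n_0$ is insolvable; (ii) every insolvable group of order $2^r\cdot n_0$ has a non-abelian composition factor of order $n_0$.
   Context: A positive integer $n$ is called solvable if every group of order $n$ is solvable. *)

theory Defs
  imports "HOL-Algebra.Algebra"
begin

definition composition_series :: "('a, 'b) monoid_scheme \<Rightarrow> 'a set list \<Rightarrow> bool" where
  "composition_series G Hs \<longleftrightarrow>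
     Hs \<noteq> [] \<and> hd Hs = {\<one>\<^bsub>G\<^esub>} \<and> last Hs = carrier G \<and>
     (\<forall>H\<in>set Hs. subgroup H G) \<and>
     (\<forall>i. Suc i < length Hs \<longrightarrow>
        Hs ! i \<lhd> G\<lparr>carrier := Hs ! Suc i\<rparr> \<and>
        simple_group (G\<lparr>carrier := Hs ! Suc i\<rparr> Mod (Hs ! i)))"

definition comp_factor :: "('a, 'b) monoid_scheme \<Rightarrow> 'a set list \<Rightarrow> nat \<Rightarrow> 'a set monoid" where
  "comp_factor G Hs i = G\<lparr>carrier := Hs ! Suc i\<rparr> Mod (Hs ! i)"

text \<open>n is solvable if every group of order n is solvable. Every group of order n
  is isomorphic to one with carrier in nat, so we quantify over groups on nat.\<close>
definition solvable_number :: "nat \<Rightarrow> bool" where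
  "solvable_number n \<longleftrightarrow> (\<forall>G :: nat monoid. group G \<and> order G = n \<longrightarrow> solvable G)"

end

theory Submission
  imports Defs
begin

(* An insolvable group whose order divides 2^r n0 has order 2^s n0 for some s:
   otherwise its order divides n0/2 or (2^r n0)/p for an odd prime p dividing n0, which are
   solvable numbers by hypotheses 3 and 4. Let M be a maximal normal subgroup of an insolvable
   group G of order 2^r n0. If G/M is abelian, then M is insolvable of order 2^s n0 with s < r,
   and both claims lift from M to G. Otherwise G/M is non-abelian simple of order 2^s n0, so
   s = 0 by hypothesis 2, and claim (i) for G follows from hypothesis 1 for G/M. Subgroups of
   index a power of two pass to M and to G/M because [G : H] = [G/M : HM/M] [M : H \<inter> M]. *)

lemma (in group) solvable_subgroup_iff_solvable_seq:
  assumes "subgroup H G"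
  shows "solvable (G\<lparr>carrier := H\<rparr>) \<longleftrightarrow> solvable_seq G H"
proof -
  interpret incl: group_hom "G\<lparr>carrier := H\<rparr>" G id
    using subgroup_imp_group[OF assms] subgroup.subset[OF assms]
    by (auto simp: group_hom_def group_hom_axioms_def hom_def)
  show ?thesis
    unfolding solvable_def
    using incl.solvable_imp_solvable_img[of H] incl.solvable_img_imp_solvable[of H]
      incl.G.subgroup_self by auto
qed

lemma (in group) solvable_subgroup_mono:
  assumes "subgroup H G" "subgroup K G" "K \<subseteq> H" "solvable (G\<lparr>carrier := H\<rparr>)"
  shows "solvable (G\<lparr>carrier := K\<rparr>)"
proof -
  interpret H: group "G\<lparr>carrier := H\<rparr>" using subgroup_imp_group[OF assms(1)] .
  have K: "subgroup K (G\<lparr>carrier := H\<rparr>)" using subgroup_incl assms by blast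
  then show ?thesis
    using H.solvable_subgroup[OF K assms(4)] H.solvable_subgroup_iff_solvable_seq[OF K] by simp
qed

lemma (in group_hom) solvable_subgroup_img:
  assumes "subgroup K G" "solvable (G\<lparr>carrier := K\<rparr>)"
  shows "solvable (H\<lparr>carrier := h ` K\<rparr>)"
  using group_hom.surj_hom_imp_solvable[OF induced_group_hom[OF assms(1)]] assms(2) by simp

lemma (in group) solvable_by_abelian_quotient:
  assumes "N \<lhd> G" "solvable (G\<lparr>carrier := N\<rparr>)" "comm_group (G Mod N)"
  shows "solvable G"
proof -
  have "subgroup N G" using assms(1) normal_imp_subgroup by blast
  then have "solvable_seq G N" using solvable_subgroup_iff_solvable_seq assms(2) by blast
  then show ?thesis
    unfolding solvable_def using solvable_seq.extension[of G N "carrier G"] assms subgroup_self by simp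
qed

lemma (in simple_group) solvable_imp_comm_group:
  assumes "solvable G"
  shows "comm_group G"
proof -
  consider "derived G (carrier G) = carrier G" | "derived G (carrier G) = {\<one>}"
    using no_real_normal_subgroup[OF derived_self_is_normal] by blast
  then show ?thesis
  proof cases
    case 1
    then have "(derived G ^^ n) (carrier G) = carrier G" for n by (induction n) simp_all
    then show ?thesis using assms simple_not_triv solvable_iff_trivial_derived_seq by auto
  next
    case 2
    then have "comm_group (G Mod {\<one>})" using derived_quot_is_comm_group by simp
    moreover have "G Mod {\<one>} \<cong> G" using trivial_factor_iso by (rule is_isoI)
    ultimately show ?thesis using comm_group.iso_imp_comm_group is_monoid by blast
  qed
qed

lemma iso_solvable_iff:
  assumes "\<phi> \<in> iso G K" "group G" "group K"
  shows "solvable G \<longleftrightarrow> solvable K"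
proof -
  interpret group_hom G K \<phi>
    using assms iso_imp_homomorphism by (simp add: group_hom_def group_hom_axioms_def)
  show ?thesis
    using inj_hom_imp_solvable surj_hom_imp_solvable assms(1) by (auto simp: iso_def bij_betw_def)
qed

lemma (in group_hom) card_image_mult_card_kernel:
  "card (h ` carrier G) * card (kernel G H h) = order G"
proof -
  interpret img: group_hom G "H\<lparr>carrier := h ` carrier G\<rparr>" h
    using induced_group_hom[OF G.subgroup_self] by simp
  have "kernel G (H\<lparr>carrier := h ` carrier G\<rparr>) h = kernel G H h"
    by (simp add: kernel_def)
  then have "order (G Mod kernel G H h) = card (h ` carrier G)"
    using iso_same_order[OF img.FactGroup_iso_set] by (simp add: order_def)
  then show ?thesis
    using G.lagrange[OF subgroup_kernel] by (simp add: order_def FactGroup_def)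
qed

lemma (in group) r_coset_eq_self_iff:
  assumes "subgroup H G" "x \<in> carrier G"
  shows "H #> x = H \<longleftrightarrow> x \<in> H"
  using coset_join1 coset_join2 assms by blast

lemma (in group) prime_power_index_split:
  assumes fin: "finite (carrier G)" and M: "M \<lhd> G" and H: "subgroup H G"
    and p: "Factorial_Ring.prime (p::nat)" and index: "order G = p ^ k * card H"
  obtains a b where "order (G Mod M) = p ^ a * card ((\<lambda>x. M #> x) ` H)"
    and "card M = p ^ b * card (H \<inter> M)"
proof -
  let ?\<pi> = "\<lambda>x. M #>\<^bsub>G\<^esub> x"
  interpret M: normal M G by fact
  interpret \<pi>: group_hom G "G Mod M" ?\<pi>
    using M.factorgroup_is_group M.r_coset_hom_Mod by (simp add: group_hom_def group_hom_axioms_def)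
  interpret \<pi>H: group_hom "G\<lparr>carrier := H\<rparr>" "G Mod M" ?\<pi>
    using \<pi>.induced_group_hom'[OF H] .
  have "kernel (G\<lparr>carrier := H\<rparr>) (G Mod M) ?\<pi> = H \<inter> M"
    using r_coset_eq_self_iff[OF M.subgroup_axioms] subgroup.subset[OF H]
    by (auto simp: kernel_def)
  then have card_H: "card (?\<pi> ` H) * card (H \<inter> M) = card H"
    using \<pi>H.card_image_mult_card_kernel by (simp add: order_def)
  obtain i where i: "order (G Mod M) = i * card (?\<pi> ` H)"
    using group.lagrange[OF \<pi>.H.group_axioms \<pi>.subgroup_img_is_subgroup[OF H]] by metis
  have "subgroup (H \<inter> M) (G\<lparr>carrier := M\<rparr>)"
    using subgroup_incl[OF subgroups_Inter_pair[OF H M.subgroup_axioms] M.subgroup_axioms] by simp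
  then have "card (rcosets\<^bsub>G\<lparr>carrier := M\<rparr>\<^esub> (H \<inter> M)) * card (H \<inter> M) = card M"
    using group.lagrange[OF subgroup_imp_group[OF M.subgroup_axioms]] by (simp add: order_def)
  then obtain j where j: "card M = j * card (H \<inter> M)" by metis
  have "p ^ k * card H = order (G Mod M) * card M"
    using lagrange[OF M.subgroup_axioms] index by (simp add: order_def FactGroup_def)
  also have "\<dots> = (i * j) * card H"
    using i j card_H by (simp add: ac_simps)
  finally have "p ^ k * card H = (i * j) * card H" .
  moreover have "card H > 0"
    using fin subgroup.subset[OF H] subgroup.one_closed[OF H] by (auto simp: card_gt_0_iff intro: finite_subset)
  ultimately have "i * j = p ^ k" by simp
  then have "i dvd p ^ k" "j dvd p ^ k" by (metis dvd_triv_left dvd_triv_right)+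
  then obtain a b where "i = p ^ a" "j = p ^ b" using divides_primepow_nat[OF p] by meson
  then show ?thesis using that i j by blast
qed

lemma countable_group_iso_nat:
  assumes "group G" "countable (carrier G)"
  obtains K :: "nat monoid" and \<phi> where "group K" "\<phi> \<in> iso G K"
proof -
  interpret group G by fact
  obtain f :: "'a \<Rightarrow> nat" where f: "inj_on f (carrier G)" using assms(2) by (rule countableE)
  define g where "g = inv_into (carrier G) f"
  have gf: "g (f x) = x" if "x \<in> carrier G" for x
    using f that unfolding g_def by simp
  define K0 :: "nat monoid"
    where "K0 = \<lparr>carrier = UNIV, monoid.mult = \<lambda>a b. f (g a \<otimes>\<^bsub>G\<^esub> g b), one = f \<one>\<^bsub>G\<^esub>\<rparr>"
  have "f \<in> hom G K0"
    unfolding hom_def K0_def using gf by auto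
  then have "group (K0\<lparr>carrier := f ` carrier G, one := f \<one>\<^bsub>G\<^esub>\<rparr>)"
    by (rule hom_imp_img_group)
  moreover have "f \<in> iso G (K0\<lparr>carrier := f ` carrier G, one := f \<one>\<^bsub>G\<^esub>\<rparr>)"
    unfolding iso_def hom_def bij_betw_def K0_def using gf f by auto
  ultimately show ?thesis using that by blast
qed

lemma solvable_number_imp_solvable:
  assumes "solvable_number n" "n > 0" "group G" "order G = n"
  shows "solvable G"
proof -
  have "finite (carrier G)" using assms(2,4) card_ge_0_finite by (auto simp: order_def)
  then obtain K :: "nat monoid" and \<phi> where K: "group K" "\<phi> \<in> iso G K"
    using countable_group_iso_nat[OF assms(3) countable_finite] by blast
  then show ?thesis
    using assms iso_same_order[OF K(2)] iso_solvable_iff[OF K(2) assms(3) K(1)]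
    unfolding solvable_number_def by simp
qed

lemma solvable_number_dvd_imp_solvable:
  assumes "solvable_number n" "n > 0" "group G" "order G dvd n"
  shows "solvable G"
proof -
  obtain c where c: "n = order G * c" using assms(4) by blast
  then have "c > 0" using assms(2) by simp
  let ?P = "G \<times>\<times> integer_mod_group c"
  have "order ?P = n"
    using c \<open>c > 0\<close> by (simp add: order_def carrier_integer_mod_group card_cartesian_product)
  then have "solvable ?P"
    using solvable_number_imp_solvable[OF assms(1,2)] DirProd_group[OF assms(3) group_integer_mod_group] by blast
  moreover have "fst \<in> hom ?P G"
    by (auto simp: hom_def DirProd_def)
  then have "group_hom ?P G fst"
    using assms(3) DirProd_group[OF assms(3) group_integer_mod_group]
    by (simp add: group_hom_def group_hom_axioms_def)
  moreover have "fst ` carrier ?P = carrier G"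
    using \<open>c > 0\<close> by (force simp: carrier_integer_mod_group)
  ultimately show ?thesis using group_hom.surj_hom_imp_solvable by blast
qed

lemma nonabelian_simple_order_transfer:
  assumes nat: "\<not> (\<exists>S :: nat monoid. simple_group S \<and> \<not> comm_group S \<and> order S = n)"
    and G: "simple_group G" "\<not> comm_group G"
  shows "order G \<noteq> n"
proof -
  interpret simple_group G by fact
  have "finite (carrier G)" using order_gt_one order_gt_0_iff_finite by simp
  then obtain K :: "nat monoid" and \<phi> where K: "group K" "\<phi> \<in> iso G K"
    using countable_group_iso_nat[OF is_group countable_finite] by blast
  have "simple_group K" using iso_simple[OF K] .
  moreover have "\<not> comm_group K"
    using iso_set_sym[OF K(2)] G(2) comm_group.iso_imp_comm_group is_isoI is_monoid by blast
  ultimately show ?thesis using nat iso_same_order[OF K(2)] by auto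
qed

lemma dvd_two_power_mult_cases:
  fixes n d r :: nat
  assumes n: "n > 0" and d: "d dvd 2 ^ r * n" and not_multiple: "\<And>s. d \<noteq> 2 ^ s * n"
  obtains p where "Factorial_Ring.prime p" "odd p" "p dvd n" "d dvd 2 ^ r * n div p"
    | "even n" "d dvd n div 2"
proof -
  define g where "g = gcd d n"
  have "g > 0" using n by (simp add: g_def)
  obtain d' q where dq: "d = d' * g" "n = q * g" and coprime: "coprime d' q"
    using gcd_coprime_exists[of d n] n unfolding g_def by auto
  have "d' dvd 2 ^ r * q" using d dq \<open>g > 0\<close> by (simp add: ac_simps)
  then have d'_dvd: "d' dvd 2 ^ r" using coprime by (simp add: coprime_dvd_mult_left_iff)
  have "q \<noteq> 1"
  proof
    assume "q = 1"
    then obtain s where "d' = 2 ^ s" using d'_dvd divides_primepow_nat[OF two_is_prime_nat] by blast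
    then show False using not_multiple[of s] dq \<open>q = 1\<close> by simp
  qed
  show ?thesis
  proof (cases "\<exists>p. Factorial_Ring.prime p \<and> odd p \<and> p dvd q")
    case True
    then obtain p q' where p: "Factorial_Ring.prime p" "odd p" and q: "q = p * q'" by blast
    then have "2 ^ r * n div p = 2 ^ r * g * q'" using dq prime_gt_0_nat by simp
    moreover have "d dvd 2 ^ r * g * q'" using d'_dvd dq by (simp add: ac_simps mult_dvd_mono)
    ultimately show ?thesis using that(1) p q dq by simp
  next
    case False
    obtain p where p: "Factorial_Ring.prime p" "p dvd q" using prime_factor_nat[OF \<open>q \<noteq> 1\<close>] by blast
    then have "p = 2" using False by (metis primes_dvd_imp_eq two_is_prime_nat)
    then have "even q" using p by simp
    then have "odd d'" using coprime coprime_common_divisor[of d' q 2] by auto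
    moreover obtain i where "d' = 2 ^ i" using d'_dvd divides_primepow_nat[OF two_is_prime_nat] by auto
    ultimately have "d' = 1" by simp
    then show ?thesis using that(2) \<open>even q\<close> dq by auto
  qed
qed

lemma insolvable_order_two_power_mult:
  assumes n: "n > 0"
    and half: "even n \<longrightarrow> solvable_number (n div 2)"
    and odd_prime: "\<forall>p r. Factorial_Ring.prime (p::nat) \<and> odd p \<and> p dvd n \<longrightarrow>
                      solvable_number (2 ^ r * n div p)"
    and G: "group G" "order G dvd 2 ^ r * n" "\<not> solvable G"
  obtains s where "order G = 2 ^ s * n"
proof (cases "\<exists>s. order G = 2 ^ s * n")
  case False
  show ?thesis
  proof (rule dvd_two_power_mult_cases[OF n G(2)])
    show "order G \<noteq> 2 ^ s * n" for s using False by blast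
  next
    fix p assume p: "Factorial_Ring.prime p" "odd p" "p dvd n" "order G dvd 2 ^ r * n div p"
    have "p \<le> n" using p(3) n by (simp add: dvd_imp_le)
    also have "n \<le> 2 ^ r * n" by simp
    finally have "2 ^ r * n div p > 0" using prime_gt_0_nat[OF p(1)] by (simp add: div_greater_zero_iff)
    then show ?thesis using p odd_prime solvable_number_dvd_imp_solvable G by blast
  next
    assume "even n" "order G dvd n div 2"
    moreover have "n div 2 > 0" using n \<open>even n\<close> by (auto elim: evenE)
    ultimately show ?thesis using half solvable_number_dvd_imp_solvable G by blast
  qed
qed auto

definition two_power_index_insolvable :: "('a, 'b) monoid_scheme \<Rightarrow> bool" where
  "two_power_index_insolvable G \<longleftrightarrow>
     (\<forall>H k. subgroup H G \<and> order G = 2 ^ k * card H \<longrightarrow> \<not> solvable (G\<lparr>carrier := H\<rparr>))"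

lemma two_power_index_insolvableI:
  assumes "\<And>H k. subgroup H G \<Longrightarrow> order G = 2 ^ k * card H \<Longrightarrow>
             solvable (G\<lparr>carrier := H\<rparr>) \<Longrightarrow> False"
  shows "two_power_index_insolvable G"
  using assms unfolding two_power_index_insolvable_def by blast

lemma two_power_index_insolvableD:
  "two_power_index_insolvable G \<Longrightarrow> subgroup H G \<Longrightarrow> order G = 2 ^ k * card H \<Longrightarrow>
    \<not> solvable (G\<lparr>carrier := H\<rparr>)"
  unfolding two_power_index_insolvable_def by blast

lemma two_power_index_insolvable_of_normal:
  assumes G: "group G" "finite (carrier G)" and M: "M \<lhd> G"
    and M_insolvable: "two_power_index_insolvable (G\<lparr>carrier := M\<rparr>)"
  shows "two_power_index_insolvable G"
proof (rule two_power_index_insolvableI)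
  fix H k
  assume H: "subgroup H G" and index: "order G = 2 ^ k * card H"
    and solvable: "solvable (G\<lparr>carrier := H\<rparr>)"
  interpret group G by fact
  have sM: "subgroup M G" using normal_imp_subgroup[OF M] .
  have HM: "subgroup (H \<inter> M) G" using subgroups_Inter_pair[OF H sM] .
  obtain b where "card M = 2 ^ b * card (H \<inter> M)"
    using prime_power_index_split[OF G(2) M H two_is_prime_nat index] by blast
  moreover have "subgroup (H \<inter> M) (G\<lparr>carrier := M\<rparr>)" using subgroup_incl[OF HM sM] by simp
  moreover have "solvable (G\<lparr>carrier := H \<inter> M\<rparr>)" using solvable_subgroup_mono[OF H HM _ solvable] by blast
  ultimately show False
    using two_power_index_insolvableD[OF M_insolvable, of "H \<inter> M" b] by (simp add: order_def)
qed

lemma two_power_index_insolvable_of_quotient: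
  assumes G: "group G" "finite (carrier G)" and M: "M \<lhd> G"
    and Q_insolvable: "two_power_index_insolvable (G Mod M)"
  shows "two_power_index_insolvable G"
proof (rule two_power_index_insolvableI)
  fix H k
  assume H: "subgroup H G" and index: "order G = 2 ^ k * card H"
    and solvable: "solvable (G\<lparr>carrier := H\<rparr>)"
  interpret M: normal M G by fact
  interpret \<pi>: group_hom G "G Mod M" "\<lambda>x. M #>\<^bsub>G\<^esub> x"
    using M.factorgroup_is_group M.r_coset_hom_Mod by (simp add: group_hom_def group_hom_axioms_def)
  obtain a where "order (G Mod M) = 2 ^ a * card ((\<lambda>x. M #>\<^bsub>G\<^esub> x) ` H)"
    using group.prime_power_index_split[OF G M H two_is_prime_nat index] by blast
  then show False
    using two_power_index_insolvableD[OF Q_insolvable \<pi>.subgroup_img_is_subgroup[OF H]]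
      \<pi>.solvable_subgroup_img[OF H solvable] by blast
qed

lemma two_power_index_insolvable_iso:
  assumes "\<phi> \<in> iso G K" "group G" "group K" "two_power_index_insolvable K"
  shows "two_power_index_insolvable G"
proof (rule two_power_index_insolvableI)
  fix H k
  assume H: "subgroup H G" and index: "order G = 2 ^ k * card H"
    and solvable: "solvable (G\<lparr>carrier := H\<rparr>)"
  interpret \<phi>: group_hom G K \<phi>
    using assms(1-3) iso_imp_homomorphism by (simp add: group_hom_def group_hom_axioms_def)
  have "card (\<phi> ` H) = card H"
    using assms(1) subgroup.subset[OF H] by (auto simp: iso_def bij_betw_def intro: card_image inj_on_subset)
  then have "order K = 2 ^ k * card (\<phi> ` H)" using iso_same_order[OF assms(1)] index by simp
  then show False
    using two_power_index_insolvableD[OF assms(4) \<phi>.subgroup_img_is_subgroup[OF H]]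
      \<phi>.solvable_subgroup_img[OF H solvable] by blast
qed

lemma two_power_index_insolvable_transfer:
  assumes nat: "\<forall>K :: nat monoid. group K \<and> order K = n \<and> \<not> solvable K \<longrightarrow>
                  two_power_index_insolvable K"
    and G: "group G" "finite (carrier G)" "order G = n" "\<not> solvable G"
  shows "two_power_index_insolvable G"
proof -
  obtain K :: "nat monoid" and \<phi> where K: "group K" "\<phi> \<in> iso G K"
    using countable_group_iso_nat[OF G(1) countable_finite[OF G(2)]] .
  then have "two_power_index_insolvable K"
    using nat iso_same_order[OF K(2)] iso_solvable_iff[OF K(2) G(1) K(1)] G(3,4) by simp
  then show ?thesis using two_power_index_insolvable_iso K G(1) by blast
qed

lemma (in group) exists_simple_quotient:
  assumes fin: "finite (carrier G)" and nontrivial: "carrier G \<noteq> {\<one>}"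
  obtains M where "M \<lhd> G" "simple_group (G Mod M)"
proof -
  define S where "S = {M. M \<lhd> G \<and> M \<noteq> carrier G}"
  have "S \<subseteq> Pow (carrier G)" unfolding S_def using normal_imp_subgroup subgroup.subset by blast
  then have "finite S" using fin finite_subset by blast
  moreover have "{\<one>} \<in> S" unfolding S_def using one_is_normal nontrivial by auto
  ultimately obtain M where "M \<in> S" and maximal: "\<And>U. U \<in> S \<Longrightarrow> M \<subseteq> U \<Longrightarrow> M = U"
    using finite_has_maximal[of S] by blast
  then have M: "M \<lhd> G" "M \<noteq> carrier G" unfolding S_def by auto
  interpret M: normal M G by fact
  have "simple_group (G Mod M)"
  proof (intro simple_group.intro simple_group_axioms.intro)
    show Q: "group (G Mod M)" by (rule M.factorgroup_is_group)
    have "finite (carrier (G Mod M))" using fin by (simp add: carrier_FactGroup)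
    moreover have "carrier (G Mod M) \<noteq> {\<one>\<^bsub>G Mod M\<^esub>}" using M.fact_group_trivial_iff fin M(2) by blast
    ultimately show "1 < order (G Mod M)"
      using group.order_one_triv_iff[OF Q] monoid.order_gt_0_iff_finite[OF group.is_monoid[OF Q]] by linarith
  next
    fix Y assume Y: "Y \<lhd> G Mod M"
    have U: "\<Union>Y = {x \<in> carrier G. M #> x \<in> Y}"
      using M.factgroup_subgroup_union_char normal_imp_subgroup[OF Y] by blast
    have "M \<in> Y" using subgroup.one_closed[OF normal_imp_subgroup[OF Y]] by simp
    then have "M \<subseteq> \<Union>Y" by blast
    show "Y = carrier (G Mod M) \<or> Y = {\<one>\<^bsub>G Mod M\<^esub>}"
    proof (cases "\<Union>Y = carrier G")
      case True
      then have "carrier (G Mod M) \<subseteq> Y" using U by (auto simp: carrier_FactGroup)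
      then show ?thesis using normal_imp_subgroup[OF Y] subgroup.subset by blast
    next
      case False
      then have "\<Union>Y = M" using maximal \<open>M \<subseteq> \<Union>Y\<close> M.factgroup_subgroup_union_normal[OF Y]
        unfolding S_def by blast
      have "Y \<subseteq> {M}"
      proof
        fix C assume "C \<in> Y"
        then obtain a where a: "a \<in> carrier G" "C = M #> a"
          using subgroup.subset[OF normal_imp_subgroup[OF Y]] by (auto simp: carrier_FactGroup)
        then have "a \<in> M" using U \<open>\<Union>Y = M\<close> \<open>C \<in> Y\<close> by blast
        then show "C \<in> {M}" using a r_coset_eq_self_iff[OF M.subgroup_axioms] by simp
      qed
      then show ?thesis using \<open>M \<in> Y\<close> by auto
    qed
  qed
  then show ?thesis using that M(1) by blast
qed

lemma composition_series_snoc: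
  assumes G: "group G" and M: "M \<lhd> G" "simple_group (G Mod M)"
    and series: "composition_series (G\<lparr>carrier := M\<rparr>) Hs"
  shows "composition_series G (Hs @ [carrier G])"
proof -
  have Hs: "Hs \<noteq> []" "hd Hs = {\<one>\<^bsub>G\<^esub>}" "last Hs = M"
    and sub: "\<And>H. H \<in> set Hs \<Longrightarrow> subgroup H (G\<lparr>carrier := M\<rparr>)"
    and step: "\<And>i. Suc i < length Hs \<Longrightarrow> Hs ! i \<lhd> G\<lparr>carrier := Hs ! Suc i\<rparr> \<and>
                  simple_group (G\<lparr>carrier := Hs ! Suc i\<rparr> Mod (Hs ! i))"
    using series unfolding composition_series_def by auto
  have last_M: "Hs ! (length Hs - 1) = M" using Hs by (simp add: last_conv_nth)
  have "subgroup M G" using normal_imp_subgroup[OF M(1)] .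
  then have "\<forall>H\<in>set (Hs @ [carrier G]). subgroup H G"
    using sub group.incl_subgroup[OF G \<open>subgroup M G\<close>] group.subgroup_self[OF G] by auto
  moreover have "(Hs @ [carrier G]) ! i \<lhd> G\<lparr>carrier := (Hs @ [carrier G]) ! Suc i\<rparr> \<and>
      simple_group (G\<lparr>carrier := (Hs @ [carrier G]) ! Suc i\<rparr> Mod ((Hs @ [carrier G]) ! i))"
    if "Suc i < length (Hs @ [carrier G])" for i
  proof (cases "Suc i < length Hs")
    case True
    then show ?thesis using step by (simp add: nth_append)
  next
    case False
    then have "i = length Hs - 1" using that by simp
    then show ?thesis using last_M M Hs(1) by (simp add: nth_append)
  qed
  ultimately show ?thesis using Hs unfolding composition_series_def by simp
qed

lemma comp_factor_snoc:
  "Suc i < length Hs \<Longrightarrow> comp_factor G (Hs @ [carrier G]) i = comp_factor (G\<lparr>carrier := M\<rparr>) Hs i"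
  by (simp add: comp_factor_def nth_append)

lemma comp_factor_snoc_last:
  "Hs \<noteq> [] \<Longrightarrow> comp_factor G (Hs @ [carrier G]) (length Hs - 1) = G Mod last Hs"
  by (simp add: comp_factor_def nth_append last_conv_nth)

lemma composition_series_exists:
  fixes G :: "('a, 'b) monoid_scheme"
  assumes "group G" "finite (carrier G)"
  shows "\<exists>Hs. composition_series G Hs"
  using assms
proof (induction "order G" arbitrary: G rule: less_induct)
  case less
  interpret group G by fact
  show ?case
  proof (cases "carrier G = {\<one>\<^bsub>G\<^esub>}")
    case True
    then have "composition_series G [{\<one>\<^bsub>G\<^esub>}]"
      unfolding composition_series_def using triv_subgroup by simp
    then show ?thesis by blast
  next
    case False
    obtain M where M: "M \<lhd> G" "simple_group (G Mod M)"
      using exists_simple_quotient[OF less.prems(2) False] by blast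
    have sM: "subgroup M G" using normal_imp_subgroup[OF M(1)] .
    have "M \<noteq> carrier G" using self_factor_not_simple M(2) by blast
    then have "card M < order G"
      using less.prems(2) subgroup.subset[OF sM] by (simp add: order_def psubset_card_mono psubsetI)
    moreover have "finite M" using less.prems(2) subgroup.subset[OF sM] finite_subset by blast
    ultimately obtain Hs where "composition_series (G\<lparr>carrier := M\<rparr>) Hs"
      using less.hyps[of "G\<lparr>carrier := M\<rparr>"] subgroup_imp_group[OF sM] by (auto simp: order_def)
    then show ?thesis using composition_series_snoc[OF is_group M] by blast
  qed
qed

definition has_nonabelian_comp_factor :: "('a, 'b) monoid_scheme \<Rightarrow> nat \<Rightarrow> bool" where
  "has_nonabelian_comp_factor G n \<longleftrightarrow>
     (\<exists>Hs i. composition_series G Hs \<and> Suc i < length Hs \<and>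
        \<not> comm_group (comp_factor G Hs i) \<and> order (comp_factor G Hs i) = n)"

lemma has_nonabelian_comp_factor_of_normal:
  assumes "group G" "M \<lhd> G" "simple_group (G Mod M)"
    and "has_nonabelian_comp_factor (G\<lparr>carrier := M\<rparr>) n"
  shows "has_nonabelian_comp_factor G n"
proof -
  obtain Hs i where "composition_series (G\<lparr>carrier := M\<rparr>) Hs" "Suc i < length Hs"
    "\<not> comm_group (comp_factor (G\<lparr>carrier := M\<rparr>) Hs i)"
    "order (comp_factor (G\<lparr>carrier := M\<rparr>) Hs i) = n"
    using assms(4) unfolding has_nonabelian_comp_factor_def by blast
  then show ?thesis
    unfolding has_nonabelian_comp_factor_def
    using composition_series_snoc[OF assms(1-3)] comp_factor_snoc[of i Hs G M]
    by (intro exI[of _ "Hs @ [carrier G]"] exI[of _ i]) simp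
qed

lemma has_nonabelian_comp_factor_of_quotient:
  assumes "group G" "finite (carrier G)" "M \<lhd> G" "simple_group (G Mod M)" "\<not> comm_group (G Mod M)"
  shows "has_nonabelian_comp_factor G (order (G Mod M))"
proof -
  have sM: "subgroup M G" using normal_imp_subgroup[OF assms(3)] .
  then have "finite M" using assms(2) subgroup.subset finite_subset by blast
  then obtain Hs where Hs: "composition_series (G\<lparr>carrier := M\<rparr>) Hs"
    using composition_series_exists[OF group.subgroup_imp_group[OF assms(1) sM]] by auto
  then have "Hs \<noteq> []" "last Hs = M" unfolding composition_series_def by auto
  then show ?thesis
    unfolding has_nonabelian_comp_factor_def
    using composition_series_snoc[OF assms(1,3,4) Hs] comp_factor_snoc_last[of Hs G] assms(5)
    by (intro exI[of _ "Hs @ [carrier G]"] exI[of _ "length Hs - 1"]) simp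
qed

lemma insolvable_two_power_multiple:
  fixes G :: "('a, 'b) monoid_scheme" and n0 :: nat
  assumes n0: "n0 > 0"
    and n0_index: "\<forall>K :: nat monoid. group K \<and> order K = n0 \<and> \<not> solvable K \<longrightarrow>
                     two_power_index_insolvable K"
    and no_simple: "\<forall>r'::nat. r' \<ge> 1 \<longrightarrow> \<not> (\<exists>S :: nat monoid. simple_group S \<and> \<not> comm_group S \<and>
                      order S = 2 ^ r' * n0)"
    and half_solvable: "even n0 \<longrightarrow> solvable_number (n0 div 2)"
    and odd_prime_solvable: "\<forall>p r'. Factorial_Ring.prime (p::nat) \<and> odd p \<and> p dvd n0 \<longrightarrow>
                               solvable_number ((2 ^ r' * n0) div p)"
  shows "group G \<Longrightarrow> order G = 2 ^ r * n0 \<Longrightarrow> \<not> solvable G \<Longrightarrow>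
    two_power_index_insolvable G \<and> has_nonabelian_comp_factor G n0"
proof (induction r arbitrary: G rule: less_induct)
  case (less r G)
  interpret group G by fact
  have fin: "finite (carrier G)" using less.prems(2) n0 order_gt_0_iff_finite by simp
  have "carrier G \<noteq> {\<one>\<^bsub>G\<^esub>}"
    using less.prems(3) solvable_seq.unity[of G] by (auto simp: solvable_def)
  then obtain M where M: "M \<lhd> G" "simple_group (G Mod M)" using exists_simple_quotient fin by blast
  interpret M: normal M G by fact
  interpret Q: simple_group "G Mod M" by fact
  have orders: "order (G Mod M) * card M = 2 ^ r * n0"
    using lagrange[OF M.subgroup_axioms] less.prems(2) by (simp add: order_def FactGroup_def)
  show ?case
  proof (cases "comm_group (G Mod M)")
    case True
    then have "\<not> solvable (G\<lparr>carrier := M\<rparr>)"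
      using solvable_by_abelian_quotient M(1) less.prems(3) by blast
    moreover have "card M dvd 2 ^ r * n0" using orders by (metis dvd_triv_right)
    then have "order (G\<lparr>carrier := M\<rparr>) dvd 2 ^ r * n0" by (simp add: order_def)
    ultimately obtain s where s: "card M = 2 ^ s * n0"
      using insolvable_order_two_power_mult[OF n0 half_solvable odd_prime_solvable subgroup_imp_group[OF M.subgroup_axioms]]
      by (auto simp: order_def)
    have "order (G Mod M) * 2 ^ s = 2 ^ r" using orders s n0 by simp
    then have "(2::nat) ^ s < 2 ^ r"
      using n_less_m_mult_n[of "2 ^ s" "order (G Mod M)"] Q.order_gt_one by simp
    then have "s < r" by simp
    then have "two_power_index_insolvable (G\<lparr>carrier := M\<rparr>) \<and> has_nonabelian_comp_factor (G\<lparr>carrier := M\<rparr>) n0"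
      using less.IH subgroup_imp_group[OF M.subgroup_axioms] \<open>\<not> solvable (G\<lparr>carrier := M\<rparr>)\<close> s
      by (simp add: order_def)
    then show ?thesis
      using two_power_index_insolvable_of_normal has_nonabelian_comp_factor_of_normal
        is_group fin M by blast
  next
    case False
    then have "\<not> solvable (G Mod M)" using Q.solvable_imp_comm_group by blast
    moreover have "order (G Mod M) dvd 2 ^ r * n0" using orders by (metis dvd_triv_left)
    ultimately obtain s where s: "order (G Mod M) = 2 ^ s * n0"
      using insolvable_order_two_power_mult[OF n0 half_solvable odd_prime_solvable Q.is_group] by blast
    then have "s = 0" using nonabelian_simple_order_transfer[OF _ M(2) False] no_simple by (metis less_one not_less)
    then have "order (G Mod M) = n0" using s by simp
    then have "two_power_index_insolvable (G Mod M)"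
      using two_power_index_insolvable_transfer[OF n0_index Q.is_group] Q.order_gt_one
        Q.order_gt_0_iff_finite \<open>\<not> solvable (G Mod M)\<close> by simp
    then show ?thesis
      using two_power_index_insolvable_of_quotient has_nonabelian_comp_factor_of_quotient
        is_group fin M False \<open>order (G Mod M) = n0\<close> by metis
  qed
qed

theorem lemma5p2:
  fixes n0 :: nat and G :: "('a, 'b) monoid_scheme" and r :: nat
  assumes n0_pos: "n0 > 0"
    and h1: "\<forall>K :: nat monoid. group K \<and> order K = n0 \<and> \<not> solvable K \<longrightarrow>
               (\<forall>H k. subgroup H K \<and> order K = 2 ^ k * card H \<longrightarrow>
                  \<not> solvable (K\<lparr>carrier := H\<rparr>))"
    and h2: "\<forall>r'::nat. r' \<ge> 1 \<longrightarrow> \<not> (\<exists>S :: nat monoid. simple_group S \<and> \<not> comm_group S \<and>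
               order S = 2 ^ r' * n0)"
    and h3: "even n0 \<longrightarrow> solvable_number (n0 div 2)"
    and h4: "\<forall>p r'. Factorial_Ring.prime (p::nat) \<and> odd p \<and> p dvd n0 \<longrightarrow> solvable_number ((2 ^ r' * n0) div p)"
    and G: "group G" and ord: "order G = 2 ^ r * n0" and insolv: "\<not> solvable G"
  shows "(\<forall>H k. subgroup H G \<and> order G = 2 ^ k * card H \<longrightarrow> \<not> solvable (G\<lparr>carrier := H\<rparr>))
       \<and> (\<exists>Hs i. composition_series G Hs \<and> Suc i < length Hs \<and>
              \<not> comm_group (comp_factor G Hs i) \<and> order (comp_factor G Hs i) = n0)"
  using insolvable_two_power_multiple[OF n0_pos h1[folded two_power_index_insolvable_def] h2 h3 h4 G ord insolv]
  unfolding two_power_index_insolvable_def has_nonabelian_comp_factor_def .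

end
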